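(* Let $(\mathcal L_n)_{n\ge1}$ be a sequence of random elements of $\mathcal P_1(\mathbb R)$ and let $(\mathbb L_n)_{n\ge1}$ be a uniformly integrable sequence of deterministic elements of $\mathcal P_1(\mathbb R)$. Assume that for every $f:\mathbb R\to\mathbb R$ with $|f(x)-f(y)|\le|x-y|$ for all $x,y$, $$\Big|\int_{\mathbb R}f\,d\mathcal L_n-\int_{\mathbb R}f\,d\mathbb L_n\Big|\to0\quad\text{in probability as }n\to\infty.$$ Then $\mathcal W(\mathcal L_n,\mathbb L_n)\to0$ in probability.
   Context: $\mathcal P_1(\mathbb R)$ is the space of Borel probability measures on $\mathbb R$ with finite first absolute moment, equipped with the $1$-Wasserstein distance $\mathcal W(\mathcal L_1,\mathcal L_2)=\sup_f|\int f\,d\mathcal L_1-\int f\,d\mathcal L_2|$, the supremum over all $1$-Lipschitz $f:\mathbb R\to\mathbb R$. A sequence $(\mathbb L_n)$ in $\mathcal P_1(\mathbb R)$ is uniformly integrable if $\lim_{K\to\infty}\sup_n\int_{|x|>K}|x|\,d\mathbb L_n(x)=0$. *)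

theory Defs
  imports "HOL-Probability.Probability"
begin

definition P1 :: "real measure \<Rightarrow> bool" where
  "P1 \<mu> \<longleftrightarrow> prob_space \<mu> \<and> sets \<mu> = sets borel \<and> integrable \<mu> (\<lambda>x. \<bar>x\<bar>)"

text \<open>1-Wasserstein distance (Kantorovich-Rubinstein dual form).\<close>
definition W1 :: "real measure \<Rightarrow> real measure \<Rightarrow> real" where
  "W1 \<mu> \<nu> = (SUP f \<in> {f :: real \<Rightarrow> real. 1-lipschitz_on UNIV f}.
                 \<bar>(\<integral>x. f x \<partial>\<mu>) - (\<integral>x. f x \<partial>\<nu>)\<bar>)"

definition unif_integrable :: "(nat \<Rightarrow> real measure) \<Rightarrow> bool" where
  "unif_integrable LL \<longleftrightarrow>
     (\<forall>e>0. \<exists>K. \<forall>n. (LINT x:{x. K < \<bar>x\<bar>}|LL n. \<bar>x\<bar>) \<le> e)"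

definition conv_in_prob_zero :: "'a measure \<Rightarrow> (nat \<Rightarrow> 'a \<Rightarrow> real) \<Rightarrow> bool" where
  "conv_in_prob_zero M X \<longleftrightarrow>
     (\<forall>n. X n \<in> borel_measurable M) \<and>
     (\<forall>e>0. (\<lambda>n. measure M {\<omega> \<in> space M. e < \<bar>X n \<omega>\<bar>}) \<longlonglongrightarrow> 0)"

end

theory Submission
  imports Defs
begin

text \<open>
  A 1-Lipschitz function \<open>f\<close>, shifted by \<open>f (-n)\<close>, is approximated within \<open>3/n\<close> on \<open>[-n, n]\<close>
  by one of the finitely many piecewise linear functions with slopes \<open>\<plusminus>1\<close> on the grid of mesh
  \<open>1/n\<close> (a greedy walk with steps \<open>\<plusminus>1/n\<close> tracks \<open>f\<close> along the grid); outside \<open>[-n, n]\<close> the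
  error is at most \<open>max 0 (\<bar>x\<bar> - n)\<close>. Hence \<open>W1 \<mu> \<nu>\<close> is at most a finite sum of differences of
  integrals of fixed 1-Lipschitz functions, plus \<open>6/n\<close>, plus the tail integrals of \<open>\<mu>\<close> and \<open>\<nu>\<close>.
  Since the tail function is itself 1-Lipschitz, the tail integral of \<open>L n \<omega>\<close> exceeds that of
  \<open>LL n\<close> by at most one more such difference, and uniform integrability makes the tail integrals
  of \<open>LL n\<close> small uniformly in \<open>n\<close>.
  Measurability of \<open>W1 (L n \<omega>) (LL n)\<close> in \<open>\<omega>\<close> holds because the supremum may be restricted
  to the countably many grid functions.
\<close>

lemma lipschitz_on_UNIV_abs_diff:
  "C-lipschitz_on UNIV f \<Longrightarrow> \<bar>f x - f y\<bar> \<le> C * \<bar>x - y\<bar>"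
  using lipschitz_onD[of C UNIV f x y] by (simp add: dist_real_def)

lemma lipschitz_on_UNIV_zero: "1-lipschitz_on UNIV (\<lambda>x::real. 0::real)"
  by (rule lipschitz_on_mono[OF lipschitz_on_constant]) auto

lemma lipschitz_on_borel_measurable: "C-lipschitz_on UNIV f \<Longrightarrow> f \<in> borel_measurable borel"
  by (intro borel_measurable_continuous_onI lipschitz_on_continuous_on)

definition tail_fun :: "real \<Rightarrow> real \<Rightarrow> real" where
  "tail_fun r x = max 0 (\<bar>x\<bar> - r)"

lemma tail_fun_lipschitz: "1-lipschitz_on UNIV (tail_fun r)"
  by (rule lipschitz_onI) (auto simp: dist_real_def tail_fun_def max_def abs_if)

section \<open>Piecewise linear functions on a grid\<close>

definition ramp :: "real \<Rightarrow> real \<Rightarrow> real \<Rightarrow> real" where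
  "ramp a d x = min d (max 0 (x - a))"

definition grid_point :: "nat \<Rightarrow> nat \<Rightarrow> real" where
  "grid_point n k = - real n + real k / real n"

text \<open>Slope \<open>s k\<close> on the \<open>k\<close>-th of the \<open>2n\<^sup>2\<close> cells of length \<open>1/n\<close> partitioning \<open>[-n, n]\<close>,
  constant outside \<open>[-n, n]\<close>, and \<open>0\<close> at \<open>-n\<close>.\<close>
definition grid_fun :: "nat \<Rightarrow> (nat \<Rightarrow> real) \<Rightarrow> real \<Rightarrow> real" where
  "grid_fun n s x = (\<Sum>k<2*n*n. s k * ramp (grid_point n k) (1 / real n) x)"

definition grid_funs :: "nat \<Rightarrow> (real \<Rightarrow> real) set" where
  "grid_funs n = grid_fun n ` (\<Pi>\<^sub>E k\<in>{..<2*n*n}. {-1, 1})"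

lemma ramp_mono: "0 \<le> d \<Longrightarrow> x \<le> y \<Longrightarrow> ramp a d x \<le> ramp a d y"
  by (auto simp: ramp_def min_def max_def)

lemma sum_ramp_consecutive:
  assumes "0 \<le> d"
  shows "(\<Sum>j<N. ramp (a + real j * d) d x) = min (real N * d) (max 0 (x - a))"
proof (induction N)
  case 0
  then show ?case using assms by (simp add: min_def max_def)
next
  case (Suc N)
  have "min e (max 0 (x - a)) + min d (max 0 (x - (a + e))) = min (d + e) (max 0 (x - a))"
    if "0 \<le> e" for e
    using assms that unfolding min_def max_def by auto
  from this[of "real N * d"] show ?case
    using Suc assms by (simp add: ramp_def distrib_right)
qed

lemma grid_fun_lipschitz:
  assumes "\<And>k. k < 2*n*n \<Longrightarrow> \<bar>s k\<bar> \<le> 1"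
  shows "1-lipschitz_on UNIV (grid_fun n s)"
proof -
  define d :: real where "d = 1 / real n"
  have d: "0 \<le> d" by (simp add: d_def)
  have grid: "grid_point n k = - real n + real k * d" for k
    by (simp add: grid_point_def d_def)
  let ?r = "\<lambda>k. ramp (grid_point n k) d"
  have eq: "grid_fun n s = (\<lambda>x. \<Sum>k<2*n*n. s k * ?r k x)"
    by (simp add: grid_fun_def d_def fun_eq_iff)
  have diff: "\<bar>(\<Sum>k<2*n*n. s k * ?r k y) - (\<Sum>k<2*n*n. s k * ?r k x)\<bar> \<le> y - x"
    if "x \<le> y" for x y
  proof -
    have "\<bar>(\<Sum>k<2*n*n. s k * ?r k y) - (\<Sum>k<2*n*n. s k * ?r k x)\<bar>
        \<le> (\<Sum>k<2*n*n. \<bar>s k * (?r k y - ?r k x)\<bar>)"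
      by (simp add: sum_subtractf[symmetric] right_diff_distrib sum_abs)
    also have "\<dots> \<le> (\<Sum>k<2*n*n. ?r k y - ?r k x)"
    proof (rule sum_mono)
      fix k assume "k \<in> {..<2*n*n}"
      moreover have "0 \<le> ?r k y - ?r k x" using ramp_mono[OF d that] by simp
      ultimately show "\<bar>s k * (?r k y - ?r k x)\<bar> \<le> ?r k y - ?r k x"
        using assms by (simp add: abs_mult mult_left_le_one_le)
    qed
    also have "\<dots> = min (real (2*n*n) * d) (max 0 (y - - real n))
        - min (real (2*n*n) * d) (max 0 (x - - real n))"
      by (simp only: grid sum_subtractf sum_ramp_consecutive[OF d])
    also have "\<dots> \<le> y - x"
      using that by (auto simp: min_def max_def)
    finally show ?thesis .
  qed
  show ?thesis
    unfolding eq
  proof (rule lipschitz_onI)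
    fix x y :: real
    show "dist (\<Sum>k<2*n*n. s k * ?r k x) (\<Sum>k<2*n*n. s k * ?r k y) \<le> 1 * dist x y"
      using diff[of x y] diff[of y x]
      by (cases "x \<le> y") (simp_all add: dist_real_def abs_minus_commute)
  qed simp
qed

lemma ramp_at_grid_point:
  assumes "n > 0"
  shows "ramp (grid_point n j) (1 / real n) (grid_point n k) = (if j < k then 1 / real n else 0)"
proof -
  have diff: "grid_point n k - grid_point n j = (real k - real j) / real n"
    by (simp add: grid_point_def diff_divide_distrib)
  show ?thesis
  proof (cases "j < k")
    case True
    then have "1 / real n \<le> (real k - real j) / real n"
      using assms by (intro divide_right_mono) auto
    then show ?thesis using True diff by (simp add: ramp_def)
  next
    case False
    then have "(real k - real j) / real n \<le> 0"
      using assms by (intro divide_nonpos_pos) auto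
    then show ?thesis using False diff by (simp add: ramp_def)
  qed
qed

lemma grid_fun_at_grid_point:
  assumes "n > 0" "k \<le> 2*n*n"
  shows "grid_fun n s (grid_point n k) = (\<Sum>j<k. s j) / real n"
proof -
  have "grid_fun n s (grid_point n k) = (\<Sum>j\<in>{..<2*n*n} \<inter> {..<k}. s j / real n)"
    unfolding grid_fun_def ramp_at_grid_point[OF assms(1)]
    by (auto simp: sum.inter_restrict intro!: sum.cong)
  also have "{..<2*n*n} \<inter> {..<k} = {..<k}" using assms(2) by auto
  finally show ?thesis by (simp add: sum_divide_distrib)
qed

lemma grid_cell_bounds:
  assumes "j < 2*n*n"
  shows "- real n \<le> grid_point n j" and "grid_point n j + 1 / real n \<le> real n"
proof -
  show "- real n \<le> grid_point n j" by (simp add: grid_point_def)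
  have "n > 0" using assms by (cases n) auto
  have "real j + 1 \<le> 2 * real n * real n"
    using assms of_nat_le_iff[where ?'a = real, of "j + 1" "2*n*n"] by simp
  then have "(real j + 1) / real n \<le> 2 * real n"
    using \<open>n > 0\<close> by (simp add: pos_divide_le_eq)
  then show "grid_point n j + 1 / real n \<le> real n"
    by (simp add: grid_point_def add_divide_distrib[symmetric])
qed

lemma ramp_clamp:
  assumes "- N \<le> a" "a + d \<le> N" "0 \<le> d"
  shows "ramp a d x = ramp a d (max (- N) (min N x))"
  using assms unfolding ramp_def by (auto simp: min_def max_def)

lemma grid_fun_clamp: "grid_fun n s x = grid_fun n s (max (- real n) (min (real n) x))"
  unfolding grid_fun_def using grid_cell_bounds
  by (intro sum.cong refl arg_cong2[where f = "(*)"] ramp_clamp) auto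

lemma grid_cell_exists:
  assumes "n > 0" "- real n \<le> x" "x \<le> real n"
  obtains k where "k \<le> 2*n*n" "grid_point n k \<le> x" "x \<le> grid_point n k + 1 / real n"
proof
  define y where "y = (x + real n) * real n"
  have y: "0 \<le> y" "y \<le> real (2*n*n)"
    using assms by (simp_all add: y_def mult_right_mono)
  have x: "x = - real n + y / real n" using assms(1) by (simp add: y_def)
  show "nat \<lfloor>y\<rfloor> \<le> 2*n*n" using y by linarith
  show "grid_point n (nat \<lfloor>y\<rfloor>) \<le> x"
    using y assms(1) by (simp add: x grid_point_def divide_right_mono)
  show "x \<le> grid_point n (nat \<lfloor>y\<rfloor>) + 1 / real n"
    using y assms(1)
    by (simp add: x grid_point_def add_divide_distrib[symmetric] divide_right_mono)
qed

lemma grid_funs_lipschitz: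
  assumes "g \<in> grid_funs n"
  shows "1-lipschitz_on UNIV g"
proof -
  obtain s where s: "s \<in> (\<Pi>\<^sub>E k\<in>{..<2*n*n}. {-1, 1})" and g: "g = grid_fun n s"
    using assms unfolding grid_funs_def by blast
  have "\<bar>s k\<bar> \<le> 1" if "k < 2*n*n" for k
    using PiE_mem[OF s, of k] that by auto
  then show ?thesis unfolding g by (rule grid_fun_lipschitz)
qed

lemma finite_grid_funs: "finite (grid_funs n)"
  unfolding grid_funs_def by (intro finite_imageI finite_PiE) auto

lemma grid_funs_nonempty: "grid_funs n \<noteq> {}"
  by (simp add: grid_funs_def PiE_eq_empty_iff)

primrec greedy_walk :: "(nat \<Rightarrow> real) \<Rightarrow> real \<Rightarrow> nat \<Rightarrow> real" where
  "greedy_walk v d 0 = 0"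
| "greedy_walk v d (Suc k) = greedy_walk v d k + (if greedy_walk v d k \<le> v (Suc k) then d else - d)"

lemma greedy_walk_eq_sum:
  "greedy_walk v d k = d * (\<Sum>j<k. if greedy_walk v d j \<le> v (Suc j) then 1 else -1)"
  by (induction k) (auto simp: distrib_left)

lemma greedy_walk_close:
  assumes "v 0 = 0" "\<And>k. \<bar>v (Suc k) - v k\<bar> \<le> d"
  shows "\<bar>greedy_walk v d k - v k\<bar> \<le> d"
proof (induction k)
  case 0
  then show ?case using assms(1) assms(2)[of 0] by simp
next
  case (Suc k)
  then show ?case using assms(2)[of k] by (auto simp: abs_if split: if_splits)
qed

lemma grid_funs_clamp:
  assumes "g \<in> grid_funs n"
  shows "g x = g (max (- real n) (min (real n) x))"
  using assms grid_fun_clamp unfolding grid_funs_def by blast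

lemma grid_funs_approx_on_interval:
  assumes n: "n > 0" and f: "1-lipschitz_on UNIV f"
  obtains g where "g \<in> grid_funs n"
    and "\<And>x. - real n \<le> x \<Longrightarrow> x \<le> real n \<Longrightarrow> \<bar>f x - f (- real n) - g x\<bar> \<le> 3 / real n"
proof
  define d :: real where "d = 1 / real n"
  define v where "v k = f (grid_point n k) - f (- real n)" for k
  define s where "s j = (if greedy_walk v d j \<le> v (Suc j) then 1 else -1 :: real)" for j
  define g where "g = grid_fun n (restrict s {..<2*n*n})"
  have g_eq: "g = grid_fun n s" unfolding g_def grid_fun_def by (intro ext sum.cong) auto
  show "g \<in> grid_funs n"
    unfolding g_def grid_funs_def by (intro imageI) (auto simp: PiE_iff s_def extensional_def)
  then have g: "1-lipschitz_on UNIV g" by (rule grid_funs_lipschitz)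
  \<comment> \<open>At the grid points \<open>g\<close> is the greedy walk, which tracks the values of \<open>f\<close> within \<open>d\<close>.\<close>
  have v_step: "\<bar>v (Suc k) - v k\<bar> \<le> d" for k
    using lipschitz_on_UNIV_abs_diff[OF f, of "grid_point n (Suc k)" "grid_point n k"] n
    by (simp add: v_def d_def grid_point_def diff_divide_distrib[symmetric])
  have v0: "v 0 = 0" by (simp add: v_def grid_point_def)
  have at_grid: "\<bar>v k - g (grid_point n k)\<bar> \<le> d" if "k \<le> 2*n*n" for k
  proof -
    have "g (grid_point n k) = greedy_walk v d k"
      unfolding g_eq grid_fun_at_grid_point[OF n that] greedy_walk_eq_sum[of v d k]
      by (simp add: s_def d_def)
    then show ?thesis using greedy_walk_close[OF v0 v_step, of k] by (simp add: abs_minus_commute)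
  qed
  fix x assume x: "- real n \<le> x" "x \<le> real n"
  obtain k where k: "k \<le> 2*n*n" "grid_point n k \<le> x" "x \<le> grid_point n k + d"
    using grid_cell_exists[OF n x] unfolding d_def by blast
  let ?t = "grid_point n k"
  have "\<bar>x - ?t\<bar> \<le> d" "\<bar>?t - x\<bar> \<le> d" using k(2,3) by (simp_all add: abs_le_iff)
  then have "\<bar>f x - f ?t\<bar> \<le> d" "\<bar>g ?t - g x\<bar> \<le> d"
    using lipschitz_on_UNIV_abs_diff[OF f, of x ?t] lipschitz_on_UNIV_abs_diff[OF g, of ?t x]
    by (metis mult_1 order_trans)+
  moreover have "\<bar>f x - f (- real n) - g x\<bar> = \<bar>(f x - f ?t) + (v k - g ?t) + (g ?t - g x)\<bar>"
    by (simp add: v_def)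
  ultimately show "\<bar>f x - f (- real n) - g x\<bar> \<le> 3 / real n"
    using at_grid[OF k(1)] abs_triangle_ineq[of "f x - f ?t + (v k - g ?t)" "g ?t - g x"]
      abs_triangle_ineq[of "f x - f ?t" "v k - g ?t"] unfolding d_def by linarith
qed

lemma grid_funs_approx:
  assumes n: "n > 0" and f: "1-lipschitz_on UNIV f"
  obtains g where "g \<in> grid_funs n"
    and "\<And>x. \<bar>f x - f (- real n) - g x\<bar> \<le> 3 / real n + tail_fun (real n) x"
proof -
  obtain g where g: "g \<in> grid_funs n"
    and inner: "\<And>x. - real n \<le> x \<Longrightarrow> x \<le> real n \<Longrightarrow> \<bar>f x - f (- real n) - g x\<bar> \<le> 3 / real n"
    using grid_funs_approx_on_interval[OF n f] by blast
  have "\<bar>f x - f (- real n) - g x\<bar> \<le> 3 / real n + tail_fun (real n) x" for x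
  proof -
    define x' where "x' = max (- real n) (min (real n) x)"
    have "g x = g x'" unfolding x'_def by (rule grid_funs_clamp[OF g])
    then have "\<bar>f x - f (- real n) - g x\<bar> \<le> \<bar>f x - f x'\<bar> + \<bar>f x' - f (- real n) - g x'\<bar>"
      by simp
    also have "\<dots> \<le> \<bar>x - x'\<bar> + 3 / real n"
      using lipschitz_on_UNIV_abs_diff[OF f, of x x'] inner[of x'] n by (simp add: x'_def)
    finally show ?thesis by (auto simp: x'_def tail_fun_def)
  qed
  with g show ?thesis by (rule that)
qed

lemma P1_prob_space: "P1 \<mu> \<Longrightarrow> prob_space \<mu>"
  by (simp add: P1_def)

lemma P1_measurable: "P1 \<mu> \<Longrightarrow> f \<in> borel_measurable borel \<Longrightarrow> f \<in> borel_measurable \<mu>"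
  unfolding P1_def using measurable_cong_sets[of \<mu> borel borel borel] by auto

lemma P1_integrable_lipschitz:
  fixes f :: "real \<Rightarrow> real"
  assumes \<mu>: "P1 \<mu>" and f: "C-lipschitz_on UNIV f"
  shows "integrable \<mu> f"
proof (rule Bochner_Integration.integrable_bound)
  have "integrable \<mu> (\<lambda>x. \<bar>f 0\<bar>)"
    using P1_prob_space[OF \<mu>] by (simp add: prob_space.finite_measure finite_measure.integrable_const)
  moreover have "integrable \<mu> (\<lambda>x. \<bar>x\<bar>)"
    using \<mu> by (simp add: P1_def)
  then have "integrable \<mu> (\<lambda>x. C * \<bar>x\<bar>)" by simp
  ultimately show "integrable \<mu> (\<lambda>x. \<bar>f 0\<bar> + C * \<bar>x\<bar>)"
    by (rule Bochner_Integration.integrable_add)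
  show "f \<in> borel_measurable \<mu>"
    by (rule P1_measurable[OF \<mu> lipschitz_on_borel_measurable[OF f]])
  show "AE x in \<mu>. norm (f x) \<le> norm (\<bar>f 0\<bar> + C * \<bar>x\<bar>)"
  proof (rule AE_I2)
    fix x
    have "0 \<le> C" using f by (rule lipschitz_on_nonneg)
    then show "norm (f x) \<le> norm (\<bar>f 0\<bar> + C * \<bar>x\<bar>)"
      using lipschitz_on_UNIV_abs_diff[OF f, of x 0] by simp
  qed
qed

lemma P1_integral_diff_le_approx:
  assumes "P1 \<mu>" "P1 \<nu>" "1-lipschitz_on UNIV f" "1-lipschitz_on UNIV g"
    and approx: "\<And>x. \<bar>f x - c - g x\<bar> \<le> B + tail_fun r x"
  shows "\<bar>(\<integral>x. f x \<partial>\<mu>) - (\<integral>x. f x \<partial>\<nu>)\<bar>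
    \<le> \<bar>(\<integral>x. g x \<partial>\<mu>) - (\<integral>x. g x \<partial>\<nu>)\<bar> + 2 * B + (\<integral>x. tail_fun r x \<partial>\<mu>) + (\<integral>x. tail_fun r x \<partial>\<nu>)"
proof -
  have err: "\<bar>(\<integral>x. f x \<partial>\<rho>) - c - (\<integral>x. g x \<partial>\<rho>)\<bar> \<le> B + (\<integral>x. tail_fun r x \<partial>\<rho>)"
    if \<rho>: "P1 \<rho>" for \<rho>
  proof -
    interpret prob_space \<rho> using \<rho> by (rule P1_prob_space)
    have f: "integrable \<rho> f" and g: "integrable \<rho> g" and t: "integrable \<rho> (tail_fun r)"
      using \<rho> assms(3,4) tail_fun_lipschitz by (auto intro: P1_integrable_lipschitz)
    have "\<bar>\<integral>x. f x - c - g x \<partial>\<rho>\<bar> \<le> (\<integral>x. B + tail_fun r x \<partial>\<rho>)"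
      using f g t approx by (intro integral_abs_bound_integral) auto
    then show ?thesis using f g t by (simp add: prob_space)
  qed
  show ?thesis using err[OF assms(1)] err[OF assms(2)] by linarith
qed

lemma lipschitz_integral_diff_le_first_moments:
  assumes "P1 \<mu>" "P1 \<nu>" "1-lipschitz_on UNIV f"
  shows "\<bar>(\<integral>x. f x \<partial>\<mu>) - (\<integral>x. f x \<partial>\<nu>)\<bar> \<le> (\<integral>x. \<bar>x\<bar> \<partial>\<mu>) + (\<integral>x. \<bar>x\<bar> \<partial>\<nu>)"
proof -
  have "\<bar>f x - f 0 - 0\<bar> \<le> 0 + tail_fun 0 x" for x
    using lipschitz_on_UNIV_abs_diff[OF assms(3), of x 0] by (simp add: tail_fun_def)
  from P1_integral_diff_le_approx[OF assms lipschitz_on_UNIV_zero this]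
  show ?thesis by (simp add: tail_fun_def)
qed

section \<open>The Wasserstein distance through grid functions\<close>

lemma bdd_above_integral_diff_lipschitz:
  fixes G :: "(real \<Rightarrow> real) set"
  assumes "P1 \<mu>" "P1 \<nu>" "\<And>g. g \<in> G \<Longrightarrow> 1-lipschitz_on UNIV g"
  shows "bdd_above ((\<lambda>g. \<bar>(\<integral>x. g x \<partial>\<mu>) - (\<integral>x. g x \<partial>\<nu>)\<bar>) ` G)"
proof (rule bdd_aboveI2)
  fix g assume "g \<in> G"
  then show "\<bar>(\<integral>x. g x \<partial>\<mu>) - (\<integral>x. g x \<partial>\<nu>)\<bar> \<le> (\<integral>x. \<bar>x\<bar> \<partial>\<mu>) + (\<integral>x. \<bar>x\<bar> \<partial>\<nu>)"
    using assms lipschitz_integral_diff_le_first_moments by blast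
qed

lemma integral_diff_le_W1:
  assumes "P1 \<mu>" "P1 \<nu>" "1-lipschitz_on UNIV f"
  shows "\<bar>(\<integral>x. f x \<partial>\<mu>) - (\<integral>x. f x \<partial>\<nu>)\<bar> \<le> W1 \<mu> \<nu>"
  unfolding W1_def using assms
  by (intro cSUP_upper bdd_above_integral_diff_lipschitz) auto

lemma W1_nonneg: "P1 \<mu> \<Longrightarrow> P1 \<nu> \<Longrightarrow> 0 \<le> W1 \<mu> \<nu>"
  using integral_diff_le_W1[OF _ _ lipschitz_on_UNIV_zero] by fastforce

lemma W1_le_of_grid_funs:
  assumes "P1 \<mu>" "P1 \<nu>" "n > 0"
    and S: "\<And>g. g \<in> grid_funs n \<Longrightarrow> \<bar>(\<integral>x. g x \<partial>\<mu>) - (\<integral>x. g x \<partial>\<nu>)\<bar> \<le> S"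
  shows "W1 \<mu> \<nu> \<le> S + 6 / real n
    + (\<integral>x. tail_fun (real n) x \<partial>\<mu>) + (\<integral>x. tail_fun (real n) x \<partial>\<nu>)"
  unfolding W1_def
proof (rule cSUP_least)
  show "{f :: real \<Rightarrow> real. 1-lipschitz_on UNIV f} \<noteq> {}"
    using lipschitz_on_UNIV_zero by blast
  fix f :: "real \<Rightarrow> real" assume "f \<in> {f. 1-lipschitz_on UNIV f}"
  then have f: "1-lipschitz_on UNIV f" by simp
  obtain g where g: "g \<in> grid_funs n"
    and approx: "\<And>x. \<bar>f x - f (- real n) - g x\<bar> \<le> 3 / real n + tail_fun (real n) x"
    using grid_funs_approx[OF assms(3) f] by blast
  from P1_integral_diff_le_approx[OF assms(1,2) f grid_funs_lipschitz[OF g] approx] S[OF g]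
  show "\<bar>(\<integral>x. f x \<partial>\<mu>) - (\<integral>x. f x \<partial>\<nu>)\<bar> \<le> S + 6 / real n
    + (\<integral>x. tail_fun (real n) x \<partial>\<mu>) + (\<integral>x. tail_fun (real n) x \<partial>\<nu>)"
    by linarith
qed

lemma W1_le_sum_grid_funs:
  assumes "P1 \<mu>" "P1 \<nu>" "n > 0"
  shows "W1 \<mu> \<nu> \<le> (\<Sum>g\<in>grid_funs n. \<bar>(\<integral>x. g x \<partial>\<mu>) - (\<integral>x. g x \<partial>\<nu>)\<bar>)
    + \<bar>(\<integral>x. tail_fun (real n) x \<partial>\<mu>) - (\<integral>x. tail_fun (real n) x \<partial>\<nu>)\<bar>
    + 6 / real n + 2 * (\<integral>x. tail_fun (real n) x \<partial>\<nu>)"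
proof -
  have "W1 \<mu> \<nu> \<le> (\<Sum>g\<in>grid_funs n. \<bar>(\<integral>x. g x \<partial>\<mu>) - (\<integral>x. g x \<partial>\<nu>)\<bar>) + 6 / real n
      + (\<integral>x. tail_fun (real n) x \<partial>\<mu>) + (\<integral>x. tail_fun (real n) x \<partial>\<nu>)"
    using assms finite_grid_funs by (intro W1_le_of_grid_funs member_le_sum) auto
  then show ?thesis
    using abs_ge_self[of "(\<integral>x. tail_fun (real n) x \<partial>\<mu>) - (\<integral>x. tail_fun (real n) x \<partial>\<nu>)"] by linarith
qed

lemma tail_integral_tendsto_0:
  assumes "P1 \<mu>"
  shows "(\<lambda>n. \<integral>x. tail_fun (real n) x \<partial>\<mu>) \<longlonglongrightarrow> 0"
proof -
  have "(\<lambda>n. \<integral>x. tail_fun (real n) x \<partial>\<mu>) \<longlonglongrightarrow> (\<integral>x. 0 \<partial>\<mu>)"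
  proof (rule integral_dominated_convergence[where w = abs])
    show "tail_fun (real n) \<in> borel_measurable \<mu>" for n
      by (rule P1_measurable[OF assms lipschitz_on_borel_measurable[OF tail_fun_lipschitz]])
    show "integrable \<mu> abs" using assms by (simp add: P1_def)
    show "AE x in \<mu>. (\<lambda>n. tail_fun (real n) x) \<longlonglongrightarrow> 0"
    proof (intro AE_I2 tendsto_eventually eventually_sequentiallyI)
      fix x :: real and n assume "nat \<lceil>\<bar>x\<bar>\<rceil> \<le> n"
      then show "tail_fun (real n) x = 0" by (simp add: tail_fun_def)
    qed
    show "AE x in \<mu>. norm (tail_fun (real n) x) \<le> \<bar>x\<bar>" for n
      by (intro AE_I2) (simp add: tail_fun_def)
  qed simp
  then show ?thesis by simp
qed

lemma W1_eq_SUP_grid_funs: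
  assumes "P1 \<mu>" "P1 \<nu>"
  shows "W1 \<mu> \<nu> = (SUP g\<in>(\<Union>n. grid_funs n). \<bar>(\<integral>x. g x \<partial>\<mu>) - (\<integral>x. g x \<partial>\<nu>)\<bar>)"
    (is "_ = ?W")
proof (rule antisym)
  have lip: "1-lipschitz_on UNIV g" if "g \<in> (\<Union>n. grid_funs n)" for g
    using that grid_funs_lipschitz by blast
  note bdd = bdd_above_integral_diff_lipschitz[OF assms lip]
  have le: "W1 \<mu> \<nu> \<le> ?W + 6 / real n
      + (\<integral>x. tail_fun (real n) x \<partial>\<mu>) + (\<integral>x. tail_fun (real n) x \<partial>\<nu>)" if "n > 0" for n
  proof (rule W1_le_of_grid_funs[OF assms that])
    fix g assume "g \<in> grid_funs n"
    then show "\<bar>(\<integral>x. g x \<partial>\<mu>) - (\<integral>x. g x \<partial>\<nu>)\<bar> \<le> ?W" by (blast intro: cSUP_upper[OF _ bdd])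
  qed
  have "(\<lambda>n. ?W + 6 / real n + (\<integral>x. tail_fun (real n) x \<partial>\<mu>) + (\<integral>x. tail_fun (real n) x \<partial>\<nu>))
      \<longlonglongrightarrow> ?W + 0 + 0 + 0"
    using assms by (intro tendsto_add tendsto_const lim_const_over_n tail_integral_tendsto_0)
  then have "W1 \<mu> \<nu> \<le> ?W + 0 + 0 + 0"
  proof (rule LIMSEQ_le_const)
    show "\<exists>N. \<forall>n\<ge>N. W1 \<mu> \<nu> \<le> ?W + 6 / real n
      + (\<integral>x. tail_fun (real n) x \<partial>\<mu>) + (\<integral>x. tail_fun (real n) x \<partial>\<nu>)"
      using le by (intro exI[of _ 1] allI impI) simp
  qed
  then show "W1 \<mu> \<nu> \<le> ?W" by simp
next
  show "?W \<le> W1 \<mu> \<nu>"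
  proof (rule cSUP_least)
    show "(\<Union>n. grid_funs n) \<noteq> {}" using grid_funs_nonempty by blast
    show "\<bar>(\<integral>x. g x \<partial>\<mu>) - (\<integral>x. g x \<partial>\<nu>)\<bar> \<le> W1 \<mu> \<nu>" if "g \<in> (\<Union>n. grid_funs n)" for g
      using that grid_funs_lipschitz by (blast intro: integral_diff_le_W1[OF assms])
  qed
qed

lemma W1_borel_measurable:
  assumes "\<And>\<omega>. \<omega> \<in> space M \<Longrightarrow> P1 (\<mu> \<omega>)" "P1 \<nu>"
    and "\<And>g :: real \<Rightarrow> real. 1-lipschitz_on UNIV g \<Longrightarrow>
      (\<lambda>\<omega>. \<bar>(\<integral>x. g x \<partial>\<mu> \<omega>) - (\<integral>x. g x \<partial>\<nu>)\<bar>) \<in> borel_measurable M"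
  shows "(\<lambda>\<omega>. W1 (\<mu> \<omega>) \<nu>) \<in> borel_measurable M"
proof -
  let ?G = "\<Union>n. grid_funs n"
  have lip: "g \<in> ?G \<Longrightarrow> 1-lipschitz_on UNIV g" for g
    using grid_funs_lipschitz by blast
  have "(\<lambda>\<omega>. SUP g\<in>?G. \<bar>(\<integral>x. g x \<partial>\<mu> \<omega>) - (\<integral>x. g x \<partial>\<nu>)\<bar>) \<in> borel_measurable M"
  proof (rule borel_measurable_cSUP)
    show "countable ?G" by (intro countable_UN countableI_type countable_finite[OF finite_grid_funs])
    show "(\<lambda>\<omega>. \<bar>(\<integral>x. g x \<partial>\<mu> \<omega>) - (\<integral>x. g x \<partial>\<nu>)\<bar>) \<in> borel_measurable M" if "g \<in> ?G" for g
      by (rule assms(3)[OF lip[OF that]])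
    show "bdd_above ((\<lambda>g. \<bar>(\<integral>x. g x \<partial>\<mu> \<omega>) - (\<integral>x. g x \<partial>\<nu>)\<bar>) ` ?G)" if "\<omega> \<in> space M" for \<omega>
      using assms(1)[OF that] assms(2) lip by (rule bdd_above_integral_diff_lipschitz)
  qed
  moreover have "W1 (\<mu> \<omega>) \<nu> = (SUP g\<in>?G. \<bar>(\<integral>x. g x \<partial>\<mu> \<omega>) - (\<integral>x. g x \<partial>\<nu>)\<bar>)"
    if "\<omega> \<in> space M" for \<omega>
    by (rule W1_eq_SUP_grid_funs[OF assms(1)[OF that] assms(2)])
  ultimately show ?thesis
    by (simp cong: measurable_cong)
qed

lemma sets_Collect_abs_gt:
  fixes X :: "'a \<Rightarrow> real"
  assumes "X \<in> borel_measurable M"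
  shows "{\<omega> \<in> space M. e < \<bar>X \<omega>\<bar>} \<in> sets M"
  by (rule borel_measurable_less[OF borel_measurable_const borel_measurable_abs[OF assms]])

lemma conv_in_prob_zero_measurable: "conv_in_prob_zero M X \<Longrightarrow> X n \<in> borel_measurable M"
  by (simp add: conv_in_prob_zero_def)

lemma conv_in_prob_zeroD:
  "conv_in_prob_zero M X \<Longrightarrow> e > 0 \<Longrightarrow> (\<lambda>n. measure M {\<omega> \<in> space M. e < \<bar>X n \<omega>\<bar>}) \<longlonglongrightarrow> 0"
  by (simp add: conv_in_prob_zero_def)

lemma conv_in_prob_zero_dominated:
  assumes "prob_space M" and X: "\<And>n. X n \<in> borel_measurable M"
    and dom: "\<And>e. e > 0 \<Longrightarrow>
      \<exists>Z. conv_in_prob_zero M Z \<and> (\<forall>n. \<forall>\<omega>\<in>space M. \<bar>X n \<omega>\<bar> \<le> \<bar>Z n \<omega>\<bar> + e)"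
  shows "conv_in_prob_zero M X"
  unfolding conv_in_prob_zero_def
proof (intro conjI allI impI X)
  interpret prob_space M by fact
  fix e :: real assume "e > 0"
  then obtain Z where Z: "conv_in_prob_zero M Z"
    and le: "\<And>n \<omega>. \<omega> \<in> space M \<Longrightarrow> \<bar>X n \<omega>\<bar> \<le> \<bar>Z n \<omega>\<bar> + e / 2"
    using dom[of "e / 2"] by auto
  have "measure M {\<omega> \<in> space M. e < \<bar>X n \<omega>\<bar>} \<le> measure M {\<omega> \<in> space M. e / 2 < \<bar>Z n \<omega>\<bar>}" for n
  proof (rule finite_measure_mono)
    show "{\<omega> \<in> space M. e < \<bar>X n \<omega>\<bar>} \<subseteq> {\<omega> \<in> space M. e / 2 < \<bar>Z n \<omega>\<bar>}"
      using le[of _ n] by force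
  qed (rule sets_Collect_abs_gt[OF conv_in_prob_zero_measurable[OF Z]])
  with \<open>e > 0\<close> show "(\<lambda>n. measure M {\<omega> \<in> space M. e < \<bar>X n \<omega>\<bar>}) \<longlonglongrightarrow> 0"
    by (intro tendsto_sandwich[OF _ _ tendsto_const conv_in_prob_zeroD[OF Z, of "e / 2"]]) auto
qed

lemma conv_in_prob_zero_add:
  assumes "prob_space M" and X: "conv_in_prob_zero M X" and Y: "conv_in_prob_zero M Y"
  shows "conv_in_prob_zero M (\<lambda>n \<omega>. X n \<omega> + Y n \<omega>)"
  unfolding conv_in_prob_zero_def
proof (intro conjI allI impI)
  interpret prob_space M by fact
  note X_meas = conv_in_prob_zero_measurable[OF X] and Y_meas = conv_in_prob_zero_measurable[OF Y]
  show "(\<lambda>\<omega>. X n \<omega> + Y n \<omega>) \<in> borel_measurable M" for n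
    using X_meas Y_meas by simp
  fix e :: real assume "e > 0"
  let ?A = "\<lambda>n. {\<omega> \<in> space M. e / 2 < \<bar>X n \<omega>\<bar>}" and ?B = "\<lambda>n. {\<omega> \<in> space M. e / 2 < \<bar>Y n \<omega>\<bar>}"
  have "measure M {\<omega> \<in> space M. e < \<bar>X n \<omega> + Y n \<omega>\<bar>} \<le> measure M (?A n \<union> ?B n)" for n
  proof (rule finite_measure_mono)
    show "{\<omega> \<in> space M. e < \<bar>X n \<omega> + Y n \<omega>\<bar>} \<subseteq> ?A n \<union> ?B n" by auto
    show "?A n \<union> ?B n \<in> sets M"
      using sets_Collect_abs_gt[OF X_meas] sets_Collect_abs_gt[OF Y_meas] by (rule sets.Un)
  qed
  also have "measure M (?A n \<union> ?B n) \<le> measure M (?A n) + measure M (?B n)" for n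
    using sets_Collect_abs_gt[OF X_meas] sets_Collect_abs_gt[OF Y_meas] by (rule measure_Un_le)
  finally have le: "measure M {\<omega> \<in> space M. e < \<bar>X n \<omega> + Y n \<omega>\<bar>} \<le> measure M (?A n) + measure M (?B n)"
    for n .
  have lim: "(\<lambda>n. measure M (?A n) + measure M (?B n)) \<longlonglongrightarrow> 0"
    using tendsto_add[OF conv_in_prob_zeroD[OF X, of "e / 2"] conv_in_prob_zeroD[OF Y, of "e / 2"]]
      \<open>e > 0\<close> by simp
  show "(\<lambda>n. measure M {\<omega> \<in> space M. e < \<bar>X n \<omega> + Y n \<omega>\<bar>}) \<longlonglongrightarrow> 0"
    using le by (intro tendsto_sandwich[OF _ _ tendsto_const lim]) auto
qed

lemma conv_in_prob_zero_sum:
  assumes "prob_space M" "finite I" "\<And>i. i \<in> I \<Longrightarrow> conv_in_prob_zero M (X i)"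
  shows "conv_in_prob_zero M (\<lambda>n \<omega>. \<Sum>i\<in>I. X i n \<omega>)"
  using assms(2,3)
proof (induction I rule: finite_induct)
  case empty
  then show ?case by (simp add: conv_in_prob_zero_def)
next
  case (insert i I)
  then show ?case using conv_in_prob_zero_add[OF assms(1), of "X i"] by simp
qed

lemma P1_tail_integral_le_set_integral:
  assumes "P1 \<nu>" "K \<le> r" "0 \<le> r"
  shows "(\<integral>x. tail_fun r x \<partial>\<nu>) \<le> (LINT x:{x. K < \<bar>x\<bar>}|\<nu>. \<bar>x\<bar>)"
  unfolding set_lebesgue_integral_def
proof (rule integral_mono)
  have "{x::real. K < \<bar>x\<bar>} \<in> sets borel"
    by (intro borel_open open_Collect_less continuous_intros)
  then show "integrable \<nu> (\<lambda>x. indicator {x. K < \<bar>x\<bar>} x *\<^sub>R \<bar>x\<bar>)"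
    using assms(1) by (intro integrable_mult_indicator) (auto simp: P1_def)
  show "integrable \<nu> (tail_fun r)" by (rule P1_integrable_lipschitz[OF assms(1) tail_fun_lipschitz])
  show "tail_fun r x \<le> indicator {x. K < \<bar>x\<bar>} x *\<^sub>R \<bar>x\<bar>" for x
    using assms(2,3) by (cases "K < \<bar>x\<bar>") (auto simp: tail_fun_def)
qed

lemma unif_integrable_tail_integral_small:
  assumes "unif_integrable LL" "\<And>n. P1 (LL n)" "e > 0"
  shows "\<forall>\<^sub>F m in sequentially. \<forall>n. (\<integral>x. tail_fun (real m) x \<partial>LL n) \<le> e"
proof -
  obtain K where K: "\<And>n. (LINT x:{x. K < \<bar>x\<bar>}|LL n. \<bar>x\<bar>) \<le> e"
    using assms(1,3) unfolding unif_integrable_def by blast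
  show ?thesis
  proof (intro eventually_sequentiallyI allI)
    fix m n assume "nat \<lceil>K\<rceil> \<le> m"
    then have "K \<le> real m" by linarith
    then show "(\<integral>x. tail_fun (real m) x \<partial>LL n) \<le> e"
      using P1_tail_integral_le_set_integral[OF assms(2)] K[of n] by (meson of_nat_0_le_iff order_trans)
  qed
qed

theorem lemma7:
  fixes M :: "'a measure"
    and L :: "nat \<Rightarrow> 'a \<Rightarrow> real measure"
    and LL :: "nat \<Rightarrow> real measure"
  assumes "prob_space M"
    and "\<And>n. L n \<in> M \<rightarrow>\<^sub>M prob_algebra borel"
    and "\<And>n \<omega>. \<omega> \<in> space M \<Longrightarrow> P1 (L n \<omega>)"
    and "\<And>n. P1 (LL n)"
    and "unif_integrable LL"
    and "\<And>f :: real \<Rightarrow> real. 1-lipschitz_on UNIV f \<Longrightarrow>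
           conv_in_prob_zero M (\<lambda>n \<omega>. \<bar>(\<integral>x. f x \<partial>(L n \<omega>)) - (\<integral>x. f x \<partial>(LL n))\<bar>)"
  shows "conv_in_prob_zero M (\<lambda>n \<omega>. W1 (L n \<omega>) (LL n))"
proof (rule conv_in_prob_zero_dominated[OF assms(1)])
  let ?D = "\<lambda>g n \<omega>. \<bar>(\<integral>x. g x \<partial>(L n \<omega>)) - (\<integral>x. g x \<partial>(LL n))\<bar>"
  \<comment> \<open>Measurability of \<open>\<omega> \<mapsto> \<integral>g d(L n \<omega>)\<close> is part of the last hypothesis.\<close>
  show "(\<lambda>\<omega>. W1 (L n \<omega>) (LL n)) \<in> borel_measurable M" for n
    using assms(3,4) conv_in_prob_zero_measurable[OF assms(6)] by (rule W1_borel_measurable)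
  fix e :: real assume "e > 0"
  have "\<forall>\<^sub>F m in sequentially. 0 < m \<and> 6 / real m < e / 2
      \<and> (\<forall>n. (\<integral>x. tail_fun (real m) x \<partial>LL n) \<le> e / 4)"
    using \<open>e > 0\<close> assms(4,5) eventually_gt_at_top[of 0]
      order_tendstoD(2)[OF lim_const_over_n[of "6::real"], of "e / 2"]
    by (intro eventually_conj unif_integrable_tail_integral_small) auto
  then obtain m where m: "0 < m" "6 / real m < e / 2"
    "\<And>n. (\<integral>x. tail_fun (real m) x \<partial>LL n) \<le> e / 4"
    using eventually_happens'[OF sequentially_bot] by blast
  define Z where "Z n \<omega> = (\<Sum>g\<in>grid_funs m. ?D g n \<omega>) + ?D (tail_fun (real m)) n \<omega>" for n \<omega>
  have "conv_in_prob_zero M Z"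
    unfolding Z_def using assms(1,6) finite_grid_funs grid_funs_lipschitz tail_fun_lipschitz
    by (intro conv_in_prob_zero_add conv_in_prob_zero_sum) auto
  moreover have "\<bar>W1 (L n \<omega>) (LL n)\<bar> \<le> \<bar>Z n \<omega>\<bar> + e" if "\<omega> \<in> space M" for n \<omega>
  proof -
    note P1s = assms(3)[of \<omega> n, OF that] assms(4)[of n]
    have "W1 (L n \<omega>) (LL n) \<le> Z n \<omega> + e"
      using W1_le_sum_grid_funs[OF P1s m(1)] m(2) m(3)[of n] unfolding Z_def by linarith
    then show ?thesis
      using abs_of_nonneg[OF W1_nonneg[OF P1s]] abs_ge_self[of "Z n \<omega>"] by linarith
  qed
  ultimately show "\<exists>Z. conv_in_prob_zero M Z
      \<and> (\<forall>n. \<forall>\<omega>\<in>space M. \<bar>W1 (L n \<omega>) (LL n)\<bar> \<le> \<bar>Z n \<omega>\<bar> + e)"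
    by blast
qed

end
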